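(* Let $G$ be a connected graph with $|V(G)| \ge 3$. If $\det(G) \neq 1$, then $\det'(G) \le \det(G)$.
   Context: A vertex subset $S$ of $G$ is a vertex determining set if the only automorphism of $G$ fixing every vertex of $S$ is the identity; the determining number $\det(G)$ is the minimum size of a vertex determining set. For a graph $G$ with at most one isolated vertex and no component isomorphic to $K_2$, an edge subset $T$ is an edge determining set if the only automorphism $\phi$ of $G$ satisfying $\{\phi(u),\phi(v)\}=\{u,v\}$ for all $\{u,v\}\in T$ is the identity; the determining index $\det'(G)$ is the minimum size of an edge determining set. *)

theory Defs
  imports Main
begin

definition simple_graph :: "'a set \<Rightarrow> ('a \<Rightarrow> 'a \<Rightarrow> bool) \<Rightarrow> bool" where
  "simple_graph V E \<longleftrightarrow> finite V \<and> (\<forall>x y. E x y \<longrightarrow> x \<in> V \<and> y \<in> V)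
     \<and> (\<forall>x y. E x y \<longrightarrow> E y x) \<and> (\<forall>x. \<not> E x x)"

definition connected_graph :: "'a set \<Rightarrow> ('a \<Rightarrow> 'a \<Rightarrow> bool) \<Rightarrow> bool" where
  "connected_graph V E \<longleftrightarrow> (\<forall>u\<in>V. \<forall>v\<in>V. E\<^sup>*\<^sup>* u v)"

text \<open>Automorphisms (only their behaviour on V matters).\<close>
definition graph_aut :: "'a set \<Rightarrow> ('a \<Rightarrow> 'a \<Rightarrow> bool) \<Rightarrow> ('a \<Rightarrow> 'a) \<Rightarrow> bool" where
  "graph_aut V E f \<longleftrightarrow> bij_betw f V V \<and> (\<forall>x\<in>V. \<forall>y\<in>V. E (f x) (f y) \<longleftrightarrow> E x y)"

definition graph_edges :: "'a set \<Rightarrow> ('a \<Rightarrow> 'a \<Rightarrow> bool) \<Rightarrow> 'a set set" where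
  "graph_edges V E = {{u, v} | u v. E u v}"

definition vertex_determining :: "'a set \<Rightarrow> ('a \<Rightarrow> 'a \<Rightarrow> bool) \<Rightarrow> 'a set \<Rightarrow> bool" where
  "vertex_determining V E S \<longleftrightarrow> S \<subseteq> V \<and>
     (\<forall>f. graph_aut V E f \<and> (\<forall>x\<in>S. f x = x) \<longrightarrow> (\<forall>x\<in>V. f x = x))"

definition edge_determining :: "'a set \<Rightarrow> ('a \<Rightarrow> 'a \<Rightarrow> bool) \<Rightarrow> 'a set set \<Rightarrow> bool" where
  "edge_determining V E T \<longleftrightarrow> T \<subseteq> graph_edges V E \<and>
     (\<forall>f. graph_aut V E f \<and> (\<forall>u v. {u, v} \<in> T \<longrightarrow> {f u, f v} = {u, v})
        \<longrightarrow> (\<forall>x\<in>V. f x = x))"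

definition determining_number :: "'a set \<Rightarrow> ('a \<Rightarrow> 'a \<Rightarrow> bool) \<Rightarrow> nat" where
  "determining_number V E = (LEAST k. \<exists>S. vertex_determining V E S \<and> card S = k)"

definition determining_index :: "'a set \<Rightarrow> ('a \<Rightarrow> 'a \<Rightarrow> bool) \<Rightarrow> nat" where
  "determining_index V E = (LEAST k. \<exists>T. edge_determining V E T \<and> card T = k)"

end

theory Submission
  imports Defs
begin

text \<open>Take a minimum vertex determining set \<open>S\<close>. If \<open>S = {}\<close> the empty edge set is
determining; otherwise \<open>|S| \<ge> 2\<close>, so \<open>S\<close> contains distinct vertices \<open>v\<^sub>1, v\<^sub>2\<close>. Two edges
already force an automorphism to fix both: if \<open>v\<^sub>1 v\<^sub>2\<close> is an edge, take it together with an
edge leaving \<open>{v\<^sub>1, v\<^sub>2}\<close>; otherwise take the first and the last edge of a shortest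
\<open>v\<^sub>1\<close>-\<open>v\<^sub>2\<close> path, which cannot be flipped without shortening the distance. Every remaining
vertex \<open>v \<in> S\<close> is pinned by one edge from \<open>v\<close> to a neighbour closer to \<open>v\<^sub>1\<close>, because an
automorphism fixing \<open>v\<^sub>1\<close> preserves distances to \<open>v\<^sub>1\<close>. This gives an edge determining set
of size \<open>|S|\<close>.\<close>

definition graph_dist :: "('a \<Rightarrow> 'a \<Rightarrow> bool) \<Rightarrow> 'a \<Rightarrow> 'a \<Rightarrow> nat" where
  "graph_dist E u v = (LEAST n. (E ^^ n) u v)"

definition stabilises_edges :: "('a \<Rightarrow> 'a) \<Rightarrow> 'a set set \<Rightarrow> bool" where
  "stabilises_edges f T \<longleftrightarrow> (\<forall>u v. {u, v} \<in> T \<longrightarrow> {f u, f v} = {u, v})"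

lemma stabilises_edges_Un [simp]:
  "stabilises_edges f (A \<union> B) \<longleftrightarrow> stabilises_edges f A \<and> stabilises_edges f B"
  unfolding stabilises_edges_def by blast

lemma stabilises_edges_insert [simp]:
  "stabilises_edges f (insert {u, v} T) \<longleftrightarrow> {f u, f v} = {u, v} \<and> stabilises_edges f T"
  unfolding stabilises_edges_def by (auto simp: doubleton_eq_iff)

lemma stabilises_edges_empty [simp]: "stabilises_edges f {}"
  unfolding stabilises_edges_def by blast

lemma edge_determining_iff:
  "edge_determining V E T \<longleftrightarrow> T \<subseteq> graph_edges V E \<and>
     (\<forall>f. graph_aut V E f \<and> stabilises_edges f T \<longrightarrow> (\<forall>x\<in>V. f x = x))"
  unfolding edge_determining_def stabilises_edges_def ..

lemma relpowp_graph_dist: "(E ^^ n) u v \<Longrightarrow> (E ^^ graph_dist E u v) u v"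
  unfolding graph_dist_def by (rule LeastI)

lemma graph_dist_le: "(E ^^ n) u v \<Longrightarrow> graph_dist E u v \<le> n"
  unfolding graph_dist_def by (rule Least_le)

lemma connected_graph_relpowp_dist:
  assumes "connected_graph V E" "u \<in> V" "v \<in> V"
  shows "(E ^^ graph_dist E u v) u v"
proof -
  from assms have "E\<^sup>*\<^sup>* u v" unfolding connected_graph_def by blast
  then obtain n where "(E ^^ n) u v" by (metis rtranclp_power)
  then show ?thesis by (rule relpowp_graph_dist)
qed

lemma exists_neighbour_closer:
  assumes "simple_graph V E" "connected_graph V E" "u \<in> V" "v \<in> V" "u \<noteq> v"
  obtains q where "E v q" "graph_dist E u q < graph_dist E u v"
proof -
  have walk: "(E ^^ graph_dist E u v) u v"
    using connected_graph_relpowp_dist[OF assms(2-4)] .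
  then obtain m where m: "graph_dist E u v = Suc m"
    using assms(5) by (metis not0_implies_Suc relpowp_0_E)
  with walk obtain q where "(E ^^ m) u q" "E q v" by (metis relpowp_Suc_E)
  moreover have "E v q" using \<open>E q v\<close> assms(1) unfolding simple_graph_def by blast
  ultimately show ?thesis using that graph_dist_le m by fastforce
qed

lemma rtranclp_exits_set:
  assumes "E\<^sup>*\<^sup>* a b" "a \<in> A" "b \<notin> A"
  shows "\<exists>y z. y \<in> A \<and> z \<notin> A \<and> E y z"
  using assms by (induction rule: rtranclp_induct) auto

lemma graph_aut_relpowp:
  assumes "simple_graph V E" "graph_aut V E f" "(E ^^ n) x y" "x \<in> V"
  shows "(E ^^ n) (f x) (f y)"
  using assms(3)
proof (induction n arbitrary: y)
  case 0
  then show ?case by simp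
next
  case (Suc n)
  then obtain z where z: "(E ^^ n) x z" "E z y" by (metis relpowp_Suc_E)
  have "z \<in> V" "y \<in> V" using z(2) assms(1) unfolding simple_graph_def by blast+
  then have "E (f z) (f y)" using assms(2) z(2) unfolding graph_aut_def by blast
  with Suc.IH[OF z(1)] show ?case by (meson relpowp_Suc_I)
qed

lemma graph_aut_inv_into:
  assumes "graph_aut V E f"
  shows "graph_aut V E (inv_into V f)"
proof -
  have bij: "bij_betw f V V" using assms unfolding graph_aut_def by blast
  have "E (inv_into V f x) (inv_into V f y) \<longleftrightarrow> E x y" if "x \<in> V" "y \<in> V" for x y
  proof -
    have "inv_into V f x \<in> V" "inv_into V f y \<in> V"
      using that bij by (metis bij_betw_def inv_into_into)+
    moreover have "f (inv_into V f x) = x" "f (inv_into V f y) = y"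
      using that bij by (metis bij_betw_def f_inv_into_f)+
    ultimately show ?thesis using assms unfolding graph_aut_def by metis
  qed
  with bij_betw_inv_into[OF bij] show ?thesis unfolding graph_aut_def by blast
qed

lemma graph_aut_graph_dist_le:
  assumes "simple_graph V E" "connected_graph V E" "graph_aut V E f" "u \<in> V" "v \<in> V"
  shows "graph_dist E (f u) (f v) \<le> graph_dist E u v"
  using graph_dist_le[OF graph_aut_relpowp[OF assms(1,3)
        connected_graph_relpowp_dist[OF assms(2,4,5)] assms(4)]] .

lemma graph_aut_graph_dist:
  assumes "simple_graph V E" "connected_graph V E" "graph_aut V E f" "u \<in> V" "v \<in> V"
  shows "graph_dist E (f u) (f v) = graph_dist E u v"
proof -
  have bij: "bij_betw f V V" using assms(3) unfolding graph_aut_def by blast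
  let ?g = "inv_into V f"
  have "f u \<in> V" "f v \<in> V" using bij assms(4,5) by (metis bij_betwE)+
  from graph_aut_graph_dist_le[OF assms(1,2) graph_aut_inv_into[OF assms(3)] this]
  have "graph_dist E (?g (f u)) (?g (f v)) \<le> graph_dist E (f u) (f v)" .
  moreover have "?g (f u) = u" "?g (f v) = v"
    using bij assms(4,5) by (metis bij_betw_def inv_into_f_f)+
  ultimately show ?thesis using graph_aut_graph_dist_le[OF assms] by simp
qed

lemma closer_edges_fix_vertices:
  assumes "simple_graph V E" "connected_graph V E" "v\<^sub>1 \<in> V" "R \<subseteq> V - {v\<^sub>1}" "finite R"
  obtains Q where "Q \<subseteq> graph_edges V E" "card Q \<le> card R"
    "\<And>f. graph_aut V E f \<Longrightarrow> f v\<^sub>1 = v\<^sub>1 \<Longrightarrow> stabilises_edges f Q \<Longrightarrow> \<forall>x\<in>R. f x = x"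
proof -
  have "\<forall>v\<in>R. \<exists>q. E v q \<and> graph_dist E v\<^sub>1 q < graph_dist E v\<^sub>1 v"
    using exists_neighbour_closer[OF assms(1,2,3)] assms(4) by (metis Diff_iff insertCI subsetD)
  then obtain q where q: "\<And>v. v \<in> R \<Longrightarrow> E v (q v) \<and> graph_dist E v\<^sub>1 (q v) < graph_dist E v\<^sub>1 v"
    by metis
  define Q where "Q = (\<lambda>v. {v, q v}) ` R"
  have "Q \<subseteq> graph_edges V E" using q unfolding Q_def graph_edges_def by blast
  moreover have "card Q \<le> card R" unfolding Q_def using assms(5) by (rule card_image_le)
  moreover have "f x = x"
    if f: "graph_aut V E f" "f v\<^sub>1 = v\<^sub>1" "stabilises_edges f Q" and x: "x \<in> R" for f x
  proof -
    have "{f x, f (q x)} = {x, q x}"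
      using f(3) x unfolding stabilises_edges_def Q_def by blast
    moreover have "graph_dist E v\<^sub>1 (f x) = graph_dist E v\<^sub>1 x"
      using graph_aut_graph_dist[OF assms(1,2) f(1) assms(3), of x] f(2) x assms(4) by auto
    ultimately show ?thesis using q[OF x] by (metis doubleton_eq_iff less_irrefl)
  qed
  ultimately show ?thesis using that by blast
qed

lemma adjacent_pair_fixing_edges:
  assumes "simple_graph V E" "connected_graph V E" "card V \<ge> 3"
    and "v\<^sub>1 \<in> V" "v\<^sub>2 \<in> V" "E v\<^sub>1 v\<^sub>2"
  obtains e\<^sub>1 e\<^sub>2 where "e\<^sub>1 \<in> graph_edges V E" "e\<^sub>2 \<in> graph_edges V E"
    "\<And>f. graph_aut V E f \<Longrightarrow> stabilises_edges f {e\<^sub>1, e\<^sub>2} \<Longrightarrow> f v\<^sub>1 = v\<^sub>1 \<and> f v\<^sub>2 = v\<^sub>2"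
proof -
  have "\<not> V \<subseteq> {v\<^sub>1, v\<^sub>2}"
    using card_mono[of "{v\<^sub>1, v\<^sub>2}" V] assms(3) by (auto simp: card_insert_if split: if_splits)
  then obtain x where x: "x \<in> V" "x \<notin> {v\<^sub>1, v\<^sub>2}" by blast
  have "E\<^sup>*\<^sup>* v\<^sub>1 x" using assms(2,4) x(1) unfolding connected_graph_def by blast
  then obtain y z where yz: "y \<in> {v\<^sub>1, v\<^sub>2}" "z \<notin> {v\<^sub>1, v\<^sub>2}" "E y z"
    using rtranclp_exits_set[OF _ _ x(2)] by blast
  have "f v\<^sub>1 = v\<^sub>1 \<and> f v\<^sub>2 = v\<^sub>2"
    if f: "graph_aut V E f" "stabilises_edges f {{v\<^sub>1, v\<^sub>2}, {y, z}}" for f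
  proof -
    have "v\<^sub>1 \<noteq> v\<^sub>2" using assms(1,6) unfolding simple_graph_def by blast
    then have "f v\<^sub>1 \<noteq> f v\<^sub>2" using f(1) assms(4,5) unfolding graph_aut_def bij_betw_def inj_on_def
      by blast
    moreover have pair: "{f v\<^sub>1, f v\<^sub>2} = {v\<^sub>1, v\<^sub>2}" "{f y, f z} = {y, z}" using f(2) by simp_all
    \<comment> \<open>\<open>f y\<close> lies in both edges, whose only common vertex is \<open>y\<close>\<close>
    moreover have "f y = y" using pair yz(1,2) by blast
    ultimately show ?thesis using yz(1) by (auto simp: doubleton_eq_iff)
  qed
  moreover have "{v\<^sub>1, v\<^sub>2} \<in> graph_edges V E" "{y, z} \<in> graph_edges V E"
    using assms(6) yz(3) unfolding graph_edges_def by blast+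
  ultimately show ?thesis using that by blast
qed

lemma distant_pair_fixing_edges:
  assumes "simple_graph V E" "connected_graph V E"
    and "v\<^sub>1 \<in> V" "v\<^sub>2 \<in> V" "v\<^sub>1 \<noteq> v\<^sub>2" "\<not> E v\<^sub>1 v\<^sub>2"
  obtains e\<^sub>1 e\<^sub>2 where "e\<^sub>1 \<in> graph_edges V E" "e\<^sub>2 \<in> graph_edges V E"
    "\<And>f. graph_aut V E f \<Longrightarrow> stabilises_edges f {e\<^sub>1, e\<^sub>2} \<Longrightarrow> f v\<^sub>1 = v\<^sub>1 \<and> f v\<^sub>2 = v\<^sub>2"
proof -
  define k where "k = graph_dist E v\<^sub>1 v\<^sub>2"
  have walk: "(E ^^ k) v\<^sub>1 v\<^sub>2" unfolding k_def using connected_graph_relpowp_dist[OF assms(2-4)] .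
  have "k \<noteq> 0" using walk assms(5) by (metis relpowp_0_E)
  moreover have "k \<noteq> 1" using walk assms(6) by auto
  ultimately obtain j where k: "k = Suc (Suc j)" by (metis One_nat_def not0_implies_Suc)
  from walk k obtain a where a: "E v\<^sub>1 a" "(E ^^ Suc j) a v\<^sub>2" by (metis relpowp_Suc_E2)
  from a(2) obtain p where p: "(E ^^ j) a p" "E p v\<^sub>2" by (rule relpowp_Suc_E)
  \<comment> \<open>\<open>v\<^sub>1 a \<dots> p v\<^sub>2\<close> is a shortest path; flipping an end edge would shorten it\<close>
  have short: "graph_dist E a v\<^sub>2 < k" "graph_dist E a p < k" "graph_dist E v\<^sub>1 p < k"
    using graph_dist_le[OF a(2)] graph_dist_le[OF p(1)]
      graph_dist_le[OF relpowp_Suc_I2[OF a(1) p(1)]] k by simp_all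
  have "f v\<^sub>1 = v\<^sub>1 \<and> f v\<^sub>2 = v\<^sub>2"
    if f: "graph_aut V E f" "stabilises_edges f {{v\<^sub>1, a}, {v\<^sub>2, p}}" for f
  proof -
    have pair: "{f v\<^sub>1, f a} = {v\<^sub>1, a}" "{f v\<^sub>2, f p} = {v\<^sub>2, p}" using f(2) by simp_all
    have dist: "graph_dist E (f v\<^sub>1) (f v\<^sub>2) = k"
      unfolding k_def using graph_aut_graph_dist[OF assms(1,2) f(1) assms(3,4)] .
    have "f v\<^sub>1 \<noteq> a"
    proof
      assume "f v\<^sub>1 = a"
      moreover have "f v\<^sub>2 = v\<^sub>2 \<or> f v\<^sub>2 = p" using pair(2) by blast
      ultimately show False using dist short(1,2) by auto
    qed
    then have "f v\<^sub>1 = v\<^sub>1" using pair(1) by blast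
    moreover from this have "f v\<^sub>2 \<noteq> p" using dist short(3) by auto
    ultimately show ?thesis using pair(2) by blast
  qed
  moreover have "{v\<^sub>1, a} \<in> graph_edges V E" "{v\<^sub>2, p} \<in> graph_edges V E"
    using a(1) p(2) assms(1) unfolding graph_edges_def simple_graph_def by blast+
  ultimately show ?thesis using that by blast
qed

lemma pair_fixing_edges:
  assumes "simple_graph V E" "connected_graph V E" "card V \<ge> 3"
    and "v\<^sub>1 \<in> V" "v\<^sub>2 \<in> V" "v\<^sub>1 \<noteq> v\<^sub>2"
  obtains e\<^sub>1 e\<^sub>2 where "e\<^sub>1 \<in> graph_edges V E" "e\<^sub>2 \<in> graph_edges V E"
    "\<And>f. graph_aut V E f \<Longrightarrow> stabilises_edges f {e\<^sub>1, e\<^sub>2} \<Longrightarrow> f v\<^sub>1 = v\<^sub>1 \<and> f v\<^sub>2 = v\<^sub>2"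
  using adjacent_pair_fixing_edges[OF assms(1-5)] distant_pair_fixing_edges[OF assms(1,2,4-6)]
  by metis

lemma edge_determining_from_vertex_determining:
  assumes "simple_graph V E" "connected_graph V E" "card V \<ge> 3"
    and S: "vertex_determining V E S" "card S \<noteq> 1"
  obtains T where "edge_determining V E T" "card T \<le> card S"
proof (cases "S = {}")
  case True
  then have "edge_determining V E {}"
    using S(1) unfolding edge_determining_iff vertex_determining_def by simp
  with that show ?thesis by fastforce
next
  case False
  have SV: "S \<subseteq> V" using S(1) unfolding vertex_determining_def by blast
  then have finS: "finite S" using assms(1) finite_subset unfolding simple_graph_def by blast
  with False S(2) have two: "\<not> card S \<le> 1" by (simp add: le_Suc_eq)
  then obtain v\<^sub>1 v\<^sub>2 where v: "v\<^sub>1 \<in> S" "v\<^sub>2 \<in> S" "v\<^sub>1 \<noteq> v\<^sub>2"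
    using card_le_Suc0_iff_eq[OF finS] by auto
  obtain e\<^sub>1 e\<^sub>2 where e: "e\<^sub>1 \<in> graph_edges V E" "e\<^sub>2 \<in> graph_edges V E"
    "\<And>f. graph_aut V E f \<Longrightarrow> stabilises_edges f {e\<^sub>1, e\<^sub>2} \<Longrightarrow> f v\<^sub>1 = v\<^sub>1 \<and> f v\<^sub>2 = v\<^sub>2"
    using pair_fixing_edges[OF assms(1-3)] v SV by (metis subsetD)
  define R where "R = S - {v\<^sub>1, v\<^sub>2}"
  obtain Q where Q: "Q \<subseteq> graph_edges V E" "card Q \<le> card R"
    "\<And>f. graph_aut V E f \<Longrightarrow> f v\<^sub>1 = v\<^sub>1 \<Longrightarrow> stabilises_edges f Q \<Longrightarrow> \<forall>x\<in>R. f x = x"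
    using closer_edges_fix_vertices[OF assms(1,2), of v\<^sub>1 R] v SV finS unfolding R_def by blast
  have "edge_determining V E ({e\<^sub>1, e\<^sub>2} \<union> Q)"
    unfolding edge_determining_iff
  proof (intro conjI allI impI)
    show "{e\<^sub>1, e\<^sub>2} \<union> Q \<subseteq> graph_edges V E" using e(1,2) Q(1) by blast
  next
    fix f assume f: "graph_aut V E f \<and> stabilises_edges f ({e\<^sub>1, e\<^sub>2} \<union> Q)"
    then have "stabilises_edges f {e\<^sub>1, e\<^sub>2}" "stabilises_edges f Q"
      using stabilises_edges_Un by blast+
    with f e(3) have "f v\<^sub>1 = v\<^sub>1" "f v\<^sub>2 = v\<^sub>2" by blast+
    with f Q(3) \<open>stabilises_edges f Q\<close> have "\<forall>x\<in>S. f x = x" unfolding R_def by blast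
    with f S(1) show "\<forall>x\<in>V. f x = x" unfolding vertex_determining_def by blast
  qed
  moreover have "card ({e\<^sub>1, e\<^sub>2} \<union> Q) \<le> card S"
  proof -
    have "card R + 2 = card S" unfolding R_def using v finS two by (simp add: card_Diff_subset)
    moreover have "card {e\<^sub>1, e\<^sub>2} \<le> 2" by (simp add: card_insert_le_m1)
    ultimately show ?thesis using Q(2) card_Un_le[of "{e\<^sub>1, e\<^sub>2}" Q] by linarith
  qed
  ultimately show ?thesis using that by blast
qed

lemma determining_number_attained:
  obtains S where "vertex_determining V E S" "card S = determining_number V E"
proof -
  have "vertex_determining V E V" unfolding vertex_determining_def by blast
  then have "\<exists>S. vertex_determining V E S \<and> card S = card V" by blast
  then have "\<exists>S. vertex_determining V E S \<and> card S = determining_number V E"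
    unfolding determining_number_def
    by (rule LeastI[where P = "\<lambda>k. \<exists>S. vertex_determining V E S \<and> card S = k"])
  with that show ?thesis by blast
qed

lemma determining_index_le_card:
  "edge_determining V E T \<Longrightarrow> determining_index V E \<le> card T"
  unfolding determining_index_def by (metis (mono_tags) Least_le)

theorem theorem4:
  fixes V :: "'a set" and E :: "'a \<Rightarrow> 'a \<Rightarrow> bool"
  assumes "simple_graph V E"
    and "connected_graph V E"
    and "card V \<ge> 3"
    and "determining_number V E \<noteq> 1"
  shows "determining_index V E \<le> determining_number V E"
proof -
  obtain S where S: "vertex_determining V E S" "card S = determining_number V E"
    by (rule determining_number_attained)
  then obtain T where "edge_determining V E T" "card T \<le> card S"
    using edge_determining_from_vertex_determining[OF assms(1-3)] assms(4) by metis
  with S(2) show ?thesis using determining_index_le_card by fastforce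
qed

end
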